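(* Assume the standing setting and let $\epsilon>0$. If $|u^0_i-u^0_{i+1}|\le \epsilon/3^{M}$ for all $i\in\mathbb Z$, then for every coarse index $j$, $|v_r-u_r|\le\epsilon$, i.e. $|w^N_{j+1}-u^M_{(j+1)r}|\le\epsilon$.
   Context: Standing setting. Let $F:\mathbb R\to\mathbb R$ be continuously differentiable. For a spatial step $\eta>0$, a time step $\tau>0$ and an initial sequence $(z^0_i)_{i\in\mathbb Z}$ of reals, the EFC (Euler forward in time, centered in space) scheme produces $(z^n_i)_{i\in\mathbb Z,\,n\in\mathbb N}$ by $z^{n+1}_i=z^n_i-F'(z^n_i)\frac{\tau}{2\eta}\,(z^n_{i+1}-z^n_{i-1})$. It satisfies the CFL condition if $|F'(z^n_i)|\,\tau/\eta\le 1$ for all $i\in\mathbb Z$, $n\in\mathbb N$. Fix $a\in\mathbb R$, $h>0$, $\Delta t>0$, an integer $N>1$ and an even integer $r\ge 2$; put $k=h/r$, $dt=\Delta t/r$, $M=Nr$. Let $u_0:\mathbb R\to\mathbb R$. The coarse solution $(w^n_j)$ is the EFC scheme with $\eta=h$, $\tau=\Delta t$, $w^0_j=u_0(a+jh)$; the fine solution $(u^n_i)$ is the EFC scheme with $\eta=k$, $\tau=dt$, $u^0_i=u_0(a+ik)$ (so $w^0_j=u^0_{jr}$). Both are assumed to satisfy the CFL condition. Coarse nodes: $x_j=a+jh$. Interpolant: for a fixed coarse index $j$, set $p_1=x_j$, $p_2=x_{j+1}$, $d_1=w^N_j$, $d_2=w^N_{j+1}$, let $q$ be the cubic with $q(0)=p_1$,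 $q(1)=p_2$, $q'(0)=d_1$, $q'(1)=d_2$, and let $v(t)=q'(t)=(6p_1-6p_2+3d_1+3d_2)t^2+(-6p_1+6p_2-4d_1-2d_2)t+d_1$ for $t\in[0,1]$. For $0\le m\le r$ put $v_m=v(m/r)$ and $u_m=u^M_{jr+m}$ (the fine solution at time step $M$ at the fine node $x_j+mk$). *)

theory Defs
  imports Complex_Main
begin

text \<open>EFC scheme (Euler forward in time, centered in space). Fd is the derivative F'
  of the flux, eta the spatial step, tau the time step, z0 the initial sequence.
  efc Fd eta tau z0 n i is z^n_i.\<close>
primrec efc :: "(real \<Rightarrow> real) \<Rightarrow> real \<Rightarrow> real \<Rightarrow> (int \<Rightarrow> real) \<Rightarrow> nat \<Rightarrow> int \<Rightarrow> real" where
  "efc Fd eta tau z0 0 = z0"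
| "efc Fd eta tau z0 (Suc n) =
     (\<lambda>i. efc Fd eta tau z0 n i
          - Fd (efc Fd eta tau z0 n i) * (tau / (2 * eta))
              * (efc Fd eta tau z0 n (i + 1) - efc Fd eta tau z0 n (i - 1)))"

definition efc_cfl :: "(real \<Rightarrow> real) \<Rightarrow> real \<Rightarrow> real \<Rightarrow> (int \<Rightarrow> real) \<Rightarrow> bool" where
  "efc_cfl Fd eta tau z0 \<longleftrightarrow>
     (\<forall>n i. \<bar>Fd (efc Fd eta tau z0 n i)\<bar> * tau / eta \<le> 1)"

text \<open>Derivative v = q' of the cubic Hermite interpolant q.\<close>
definition herm_v :: "real \<Rightarrow> real \<Rightarrow> real \<Rightarrow> real \<Rightarrow> real \<Rightarrow> real" where
  "herm_v p1 p2 d1 d2 t =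
     (6*p1 - 6*p2 + 3*d1 + 3*d2) * t^2 + (-6*p1 + 6*p2 - 4*d1 - 2*d2) * t + d1"

end

theory Submission
  imports Defs
begin

text \<open>Under the CFL condition each EFC step moves a value by at most half the centred
  difference around it. Hence the increments of the scheme at most triple per time step, and
  after n steps a value has drifted from its initial datum by at most
  (1 + 3 + ... + 3^(n-1)) D = (3^n - 1) D / 2, where D bounds the initial increments.
  The coarse initial increments are at most r D, so at a coarse node the two solutions differ
  by at most (r (3^N - 1) + 3^(N r) - 1) D / 2, which is at most 3^(N r) D = \<epsilon> because
  r 3^N \<le> 3^(N r). Finally v(1) = w^N_(j+1), since the interpolant reproduces its end slope.\<close>

lemma efc_step_bound:
  assumes "efc_cfl Fd eta tau z0" "eta > 0" "tau > 0"
  shows "\<bar>efc Fd eta tau z0 (Suc n) i - efc Fd eta tau z0 n i\<bar>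
           \<le> \<bar>efc Fd eta tau z0 n (i + 1) - efc Fd eta tau z0 n (i - 1)\<bar> / 2"
proof -
  let ?z = "efc Fd eta tau z0 n"
  have "\<bar>Fd (?z i)\<bar> * tau / eta \<le> 1"
    using assms(1) unfolding efc_cfl_def by blast
  then have "\<bar>Fd (?z i) * (tau / (2 * eta))\<bar> \<le> 1 / 2"
    using assms(2,3) by (simp add: abs_mult)
  then have "\<bar>Fd (?z i) * (tau / (2 * eta))\<bar> * \<bar>?z (i + 1) - ?z (i - 1)\<bar>
               \<le> 1 / 2 * \<bar>?z (i + 1) - ?z (i - 1)\<bar>"
    by (rule mult_right_mono) simp
  then show ?thesis by (simp add: abs_mult)
qed

lemma efc_increment_bound:
  assumes "efc_cfl Fd eta tau z0" "eta > 0" "tau > 0"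
    and "\<And>i. \<bar>z0 (i + 1) - z0 i\<bar> \<le> D"
  shows "\<bar>efc Fd eta tau z0 n (i + 1) - efc Fd eta tau z0 n i\<bar> \<le> 3 ^ n * D"
proof (induction n arbitrary: i)
  case 0
  then show ?case using assms(4) by simp
next
  case (Suc n)
  let ?z = "efc Fd eta tau z0 n" and ?z' = "efc Fd eta tau z0 (Suc n)"
  have centred: "\<bar>?z (k + 1) - ?z (k - 1)\<bar> \<le> 2 * 3 ^ n * D" for k
    using Suc.IH[of k] Suc.IH[of "k - 1"] by simp
  have "\<bar>?z' (i + 1) - ?z (i + 1)\<bar> \<le> 3 ^ n * D"
    using efc_step_bound[OF assms(1-3), of n "i + 1"] centred[of "i + 1"] by simp
  moreover have "\<bar>?z' i - ?z i\<bar> \<le> 3 ^ n * D"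
    using efc_step_bound[OF assms(1-3), of n i] centred[of i] by simp
  moreover have "3 ^ Suc n * D = 3 ^ n * D + 3 ^ n * D + 3 ^ n * D"
    by simp
  ultimately show ?case
    using Suc.IH[of i] by linarith
qed

lemma efc_drift_bound:
  assumes "efc_cfl Fd eta tau z0" "eta > 0" "tau > 0"
    and "\<And>i. \<bar>z0 (i + 1) - z0 i\<bar> \<le> D"
  shows "\<bar>efc Fd eta tau z0 n i - z0 i\<bar> \<le> (3 ^ n - 1) / 2 * D"
proof (induction n)
  case 0
  then show ?case by simp
next
  case (Suc n)
  let ?z = "efc Fd eta tau z0 n"
  have "\<bar>?z (i + 1) - ?z (i - 1)\<bar> \<le> 2 * 3 ^ n * D"
    using efc_increment_bound[OF assms, of n i] efc_increment_bound[OF assms, of n "i - 1"]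
    by simp
  then have "\<bar>efc Fd eta tau z0 (Suc n) i - ?z i\<bar> \<le> 3 ^ n * D"
    using efc_step_bound[OF assms(1-3), of n i] by simp
  then have "\<bar>efc Fd eta tau z0 (Suc n) i - z0 i\<bar> \<le> (3 ^ n - 1) / 2 * D + 3 ^ n * D"
    using Suc.IH by linarith
  also have "\<dots> = (3 ^ Suc n - 1) / 2 * D"
    by (simp add: field_simps)
  finally show ?case .
qed

lemma increment_sum_bound:
  fixes z :: "int \<Rightarrow> real"
  assumes "\<And>i. \<bar>z (i + 1) - z i\<bar> \<le> D"
  shows "\<bar>z (i + int m) - z i\<bar> \<le> real m * D"
proof (induction m)
  case 0
  then show ?case by simp
next
  case (Suc m)
  then show ?case
    using assms[of "i + int m"] by (simp add: algebra_simps)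
qed

lemma efc_coarse_fine_gap:
  fixes z0 :: "int \<Rightarrow> real" and N r :: nat
  assumes cfl_coarse: "efc_cfl Fd h \<Delta>t (\<lambda>k. z0 (k * int r))"
    and cfl_fine: "efc_cfl Fd (h / real r) (\<Delta>t / real r) z0"
    and "h > 0" "\<Delta>t > 0" "r > 0"
    and incr: "\<And>i. \<bar>z0 (i + 1) - z0 i\<bar> \<le> D"
  shows "\<bar>efc Fd h \<Delta>t (\<lambda>k. z0 (k * int r)) N k - efc Fd (h / real r) (\<Delta>t / real r) z0 (N * r) (k * int r)\<bar>
           \<le> (real r * (3 ^ N - 1) + 3 ^ (N * r) - 1) / 2 * D"
proof -
  have coarse_incr: "\<bar>z0 ((i + 1) * int r) - z0 (i * int r)\<bar> \<le> real r * D" for i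
    using increment_sum_bound[of z0 D, OF incr, of "i * int r" r] by (simp add: algebra_simps)
  have "\<bar>efc Fd h \<Delta>t (\<lambda>k. z0 (k * int r)) N k - z0 (k * int r)\<bar> \<le> (3 ^ N - 1) / 2 * (real r * D)"
    using efc_drift_bound[OF cfl_coarse \<open>h > 0\<close> \<open>\<Delta>t > 0\<close> coarse_incr] by simp
  moreover have "\<bar>efc Fd (h / real r) (\<Delta>t / real r) z0 (N * r) (k * int r) - z0 (k * int r)\<bar>
                   \<le> (3 ^ (N * r) - 1) / 2 * D"
    using efc_drift_bound[OF cfl_fine _ _ incr] assms(3-5) by simp
  ultimately have "\<bar>efc Fd h \<Delta>t (\<lambda>k. z0 (k * int r)) N k - efc Fd (h / real r) (\<Delta>t / real r) z0 (N * r) (k * int r)\<bar>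
                   \<le> (3 ^ N - 1) / 2 * (real r * D) + (3 ^ (N * r) - 1) / 2 * D"
    by linarith
  also have "\<dots> = (real r * (3 ^ N - 1) + 3 ^ (N * r) - 1) / 2 * D"
    by (simp add: field_simps)
  finally show ?thesis .
qed

lemma linear_le_power3:
  fixes N r :: nat
  assumes "N \<ge> 1"
  shows "r * 3 ^ N \<le> 3 ^ (N * r)"
proof (induction r)
  case 0
  then show ?case by simp
next
  case (Suc r)
  have "Suc r \<le> 3 ^ r"
    by (induction r) auto
  also have "\<dots> \<le> 3 ^ (N * r)"
    using assms by (intro power_increasing) auto
  finally have "Suc r * 3 ^ N \<le> 3 ^ (N * r) * 3 ^ N"
    by (rule mult_right_mono) simp
  then show ?case
    by (simp add: power_add mult.commute)
qed

lemma herm_v_at_1: "herm_v p1 p2 d1 d2 1 = d2"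
  unfolding herm_v_def by simp

theorem proposition8:
  fixes F F' :: "real \<Rightarrow> real"
    and a h \<Delta>t \<epsilon> :: real
    and N r :: nat
    and u0 :: "real \<Rightarrow> real"
  assumes F_deriv: "\<forall>x. (F has_real_derivative F' x) (at x)"
    and F'_cont: "continuous_on UNIV F'"
    and h_pos: "h > 0" and dt_pos: "\<Delta>t > 0"
    and N_gt: "N > 1" and r_even: "even r" and r_ge: "r \<ge> 2"
    and cfl_coarse: "efc_cfl F' h \<Delta>t (\<lambda>j. u0 (a + real_of_int j * h))"
    and cfl_fine: "efc_cfl F' (h / real r) (\<Delta>t / real r) (\<lambda>i. u0 (a + real_of_int i * (h / real r)))"
    and eps_pos: "\<epsilon> > 0"
    and small: "\<forall>i::int. \<bar>u0 (a + real_of_int i * (h / real r)) - u0 (a + real_of_int (i + 1) * (h / real r))\<bar>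
                   \<le> \<epsilon> / 3 ^ (N * r)"
  shows "\<forall>j::int.
     (let w = efc F' h \<Delta>t (\<lambda>j. u0 (a + real_of_int j * h));
          u = efc F' (h / real r) (\<Delta>t / real r) (\<lambda>i. u0 (a + real_of_int i * (h / real r)));
          x = (\<lambda>j::int. a + real_of_int j * h);
          v = herm_v (x j) (x (j + 1)) (w N j) (w N (j + 1))
      in \<bar>v (real r / real r) - u (N * r) (j * int r + int r)\<bar> \<le> \<epsilon>
         \<and> \<bar>w N (j + 1) - u (N * r) ((j + 1) * int r)\<bar> \<le> \<epsilon>)"
proof
  fix j :: int
  define z0 where "z0 = (\<lambda>i::int. u0 (a + real_of_int i * (h / real r)))"
  define D where "D = \<epsilon> / 3 ^ (N * r)"
  have r_pos: "r > 0" using r_ge by simp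
  have coarse_init: "(\<lambda>k. u0 (a + real_of_int k * h)) = (\<lambda>k. z0 (k * int r))"
    using r_pos by (simp add: z0_def)
  have incr: "\<bar>z0 (i + 1) - z0 i\<bar> \<le> D" for i
    using small unfolding z0_def D_def by (metis abs_minus_commute)
  have gap: "\<bar>efc F' h \<Delta>t (\<lambda>k. z0 (k * int r)) N (j + 1) - efc F' (h / real r) (\<Delta>t / real r) z0 (N * r) ((j + 1) * int r)\<bar>
               \<le> (real r * (3 ^ N - 1) + 3 ^ (N * r) - 1) / 2 * D"
    using efc_coarse_fine_gap[OF cfl_coarse[unfolded coarse_init] cfl_fine[folded z0_def]
        h_pos dt_pos r_pos incr] .
  have "real (r * 3 ^ N) \<le> real (3 ^ (N * r))"
    using linear_le_power3[of N r] N_gt by linarith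
  then have "(real r * (3 ^ N - 1) + 3 ^ (N * r) - 1) / 2 * D \<le> 3 ^ (N * r) * D"
    using eps_pos by (intro mult_right_mono) (auto simp: D_def algebra_simps)
  also have "\<dots> = \<epsilon>"
    by (simp add: D_def)
  finally show "let w = efc F' h \<Delta>t (\<lambda>j. u0 (a + real_of_int j * h));
          u = efc F' (h / real r) (\<Delta>t / real r) (\<lambda>i. u0 (a + real_of_int i * (h / real r)));
          x = (\<lambda>j::int. a + real_of_int j * h);
          v = herm_v (x j) (x (j + 1)) (w N j) (w N (j + 1))
      in \<bar>v (real r / real r) - u (N * r) (j * int r + int r)\<bar> \<le> \<epsilon>
         \<and> \<bar>w N (j + 1) - u (N * r) ((j + 1) * int r)\<bar> \<le> \<epsilon>"
    using gap r_pos unfolding Let_def coarse_init z0_def[symmetric]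
    by (simp add: herm_v_at_1 algebra_simps)
qed

end
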